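(* Let $\Omega\subset\mathbb{R}^n$ be a bounded domain and let $(u,v)$ solve $$u_t=d_1\Delta u+a_1u-b_1u^2-c_1uv,\qquad v_t=d_2\Delta v+\frac{a_2v}{1+k(x)u}-b_2v^2-c_2uv\quad\text{in }\Omega\times(0,\infty),$$ with $\partial_\nu u=\partial_\nu v=0$ on $\partial\Omega$ and constant initial data $u(x,0)\equiv c>0$, $v(x,0)\equiv d>0$, where $k$ satisfies the standing assumptions below. Let $\tilde k=\max_{x\in\overline\Omega}k(x)$. If $$\tilde k>\frac{a_2b_1^2-c_2a_1b_1}{a_1^2c_2}\quad\text{and}\quad\frac{a_1}{a_2}>\max\left\{\frac{b_1}{c_2},\frac{c_1}{b_2}\right\},$$ then $(u,v)$ converges uniformly on $\Omega$ to $(\frac{a_1}{b_1},0)$ as $t\to\infty$.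
   Context: Standing assumptions on $k$: $k\in C^1(\overline\Omega)$, $k\ge0$, and $k$ vanishes only on a set of Lebesgue measure zero. All parameters $a_i,b_i,c_i,d_i$ are positive. *)

theory Defs
  imports "HOL-Analysis.Analysis"
begin

definition grad :: "('a::euclidean_space \<Rightarrow> real) \<Rightarrow> 'a \<Rightarrow> 'a" where
  "grad f x = (\<Sum>b\<in>Basis. frechet_derivative f (at x) b *\<^sub>R b)"

definition laplacian :: "('a::euclidean_space \<Rightarrow> real) \<Rightarrow> 'a \<Rightarrow> real" where
  "laplacian f x = (\<Sum>b\<in>Basis. frechet_derivative (\<lambda>y. frechet_derivative f (at y) b) (at x) b)"

text \<open>phi is a global C^1 defining function of Omega: Omega = {phi < 0}, grad phi nonzero on {phi = 0}.
  The outward normal on the boundary is then grad phi / |grad phi|.\<close>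
definition C1_defining_function :: "('a::euclidean_space \<Rightarrow> real) \<Rightarrow> 'a set \<Rightarrow> bool" where
  "C1_defining_function \<phi> \<Omega> \<longleftrightarrow>
     (\<forall>x. \<phi> differentiable (at x)) \<and> continuous_on UNIV (grad \<phi>) \<and>
     \<Omega> = {x. \<phi> x < 0} \<and> (\<forall>x. \<phi> x = 0 \<longrightarrow> grad \<phi> x \<noteq> 0)"

definition bounded_C1_domain :: "'a::euclidean_space set \<Rightarrow> ('a \<Rightarrow> real) \<Rightarrow> bool" where
  "bounded_C1_domain \<Omega> \<phi> \<longleftrightarrow> \<Omega> \<noteq> {} \<and> open \<Omega> \<and> connected \<Omega> \<and> bounded \<Omega> \<and>
     C1_defining_function \<phi> \<Omega>"

definition C1_on_closure :: "('a::euclidean_space \<Rightarrow> real) \<Rightarrow> 'a set \<Rightarrow> bool" where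
  "C1_on_closure k \<Omega> \<longleftrightarrow> continuous_on (closure \<Omega>) k \<and>
     (\<forall>x\<in>closure \<Omega>. k differentiable (at x within closure \<Omega>)) \<and>
     (\<forall>b\<in>Basis. continuous_on (closure \<Omega>) (\<lambda>x. frechet_derivative k (at x within closure \<Omega>) b))"

definition is_classical_solution ::
  "'a::euclidean_space set \<Rightarrow> ('a \<Rightarrow> real) \<Rightarrow> ('a \<Rightarrow> real) \<Rightarrow>
   real \<Rightarrow> real \<Rightarrow> real \<Rightarrow> real \<Rightarrow> real \<Rightarrow> real \<Rightarrow> real \<Rightarrow> real \<Rightarrow> real \<Rightarrow> real \<Rightarrow>
   ('a \<Rightarrow> real \<Rightarrow> real) \<Rightarrow> ('a \<Rightarrow> real \<Rightarrow> real) \<Rightarrow> bool" where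
  "is_classical_solution \<Omega> \<phi> k a1 b1 c1 d1 a2 b2 c2 d2 c0 d0 u v \<longleftrightarrow>
     continuous_on (closure \<Omega> \<times> {0..}) (\<lambda>(x,t). u x t) \<and>
     continuous_on (closure \<Omega> \<times> {0..}) (\<lambda>(x,t). v x t) \<and>
     (\<forall>x\<in>closure \<Omega>. u x 0 = c0 \<and> v x 0 = d0) \<and>
     (\<forall>t>0. \<forall>x\<in>\<Omega>.
        (\<lambda>y. u y t) differentiable (at x) \<and> (\<lambda>y. v y t) differentiable (at x) \<and>
        (\<forall>b\<in>Basis. (\<lambda>y. frechet_derivative (\<lambda>z. u z t) (at y) b) differentiable (at x)) \<and>
        (\<forall>b\<in>Basis. (\<lambda>y. frechet_derivative (\<lambda>z. v z t) (at y) b) differentiable (at x)) \<and>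
        ((\<lambda>s. u x s) has_real_derivative
           (d1 * laplacian (\<lambda>y. u y t) x + a1 * u x t - b1 * (u x t)\<^sup>2 - c1 * u x t * v x t)) (at t) \<and>
        ((\<lambda>s. v x s) has_real_derivative
           (d2 * laplacian (\<lambda>y. v y t) x + a2 * v x t / (1 + k x * u x t)
            - b2 * (v x t)\<^sup>2 - c2 * u x t * v x t)) (at t)) \<and>
     (\<forall>t>0. \<forall>x\<in>frontier \<Omega>.
        (\<exists>D. ((\<lambda>y. u y t) has_derivative D) (at x within closure \<Omega>) \<and> D (grad \<phi> x) = 0) \<and>
        (\<exists>D. ((\<lambda>y. v y t) has_derivative D) (at x within closure \<Omega>) \<and> D (grad \<phi> x) = 0))"

end

(*
  Everything rests on a comparison principle for scalar Neumann problems
  y_t = d \<Delta>y + G y, proved by penalisation: if \<sigma> y + h became positive, then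
  e^(-\<mu> t) (\<sigma> y + h) - \<epsilon> (dist(x, S)^2 + K), with S = {\<phi> \<le> -\<delta>} a sublevel set deep
  inside \<Omega>, would attain a positive maximum at some time after t0.  At an interior
  point the equation bounds it by 2 \<epsilon> d n < \<epsilon> K; at a boundary point the penalty has a
  nonzero normal derivative, because the nearest point of S lies in the inward normal
  direction, contradicting \<partial>_\<nu> y = 0.

  Comparison with logistic ODEs gives positivity and, when \<alpha> - \<beta> y \<le> G (resp. \<ge>),
  eventual bounds y \<le> \<alpha>/\<beta> + \<eta> (resp. \<ge>).  For the system this gives u \<le> a1/b1 and
  v \<le> a2/b2 eventually, and whenever eventually v \<le> V, then u \<ge> (a1 - c1 V)/b1 and so
  v \<le> f V = (a2 - c2 (a1 - c1 V)/b1)/b2.  Under a1/a2 > max (b1/c2) (c1/b2) the affine map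
  f stays a fixed distance below the diagonal on [0, a2/b2], so finitely many steps force
  v \<rightarrow> 0, and then u \<rightarrow> a1/b1.
*)

theory Submission
  imports Defs "HOL-Real_Asymp.Real_Asymp"
begin

lemma has_derivative_grad:
  fixes \<phi> :: "'a::euclidean_space \<Rightarrow> real"
  assumes "\<phi> differentiable (at x)"
  shows "(\<phi> has_derivative (\<lambda>h. grad \<phi> x \<bullet> h)) (at x)"
proof -
  let ?D = "frechet_derivative \<phi> (at x)"
  have lin: "linear ?D" using assms by (rule linear_frechet_derivative)
  have "?D h = grad \<phi> x \<bullet> h" for h
  proof -
    have "?D h = ?D (\<Sum>b\<in>Basis. (h \<bullet> b) *\<^sub>R b)" by (simp add: euclidean_representation)
    also have "\<dots> = (\<Sum>b\<in>Basis. (h \<bullet> b) * ?D b)"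
      using lin by (simp add: linear_sum linear_scale)
    also have "\<dots> = grad \<phi> x \<bullet> h"
      unfolding grad_def inner_sum_left by (simp add: inner_commute mult.commute)
    finally show ?thesis .
  qed
  then show ?thesis using assms frechet_derivative_works by (metis (no_types, lifting) ext)
qed

lemma bounded_C1_domain_frontier:
  assumes "bounded_C1_domain \<Omega> \<phi>" "x \<in> frontier \<Omega>"
  shows "\<phi> x = 0"
proof -
  have diff: "\<And>x. \<phi> differentiable (at x)" and \<Omega>: "\<Omega> = {x. \<phi> x < 0}" and "open \<Omega>"
    using assms(1) unfolding bounded_C1_domain_def C1_defining_function_def by auto
  then have "continuous_on UNIV \<phi>"
    by (simp add: differentiable_imp_continuous_within continuous_at_imp_continuous_on)
  then have "closure \<Omega> \<subseteq> {x. \<phi> x \<le> 0}"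
    using \<Omega> by (intro closure_minimal) (auto simp: closed_Collect_le)
  moreover have "x \<in> closure \<Omega>" "x \<notin> \<Omega>"
    using assms(2) \<open>open \<Omega>\<close> by (auto simp: frontier_def interior_open)
  ultimately show ?thesis using \<Omega> by auto
qed

lemma uniform_linearization_on_compact:
  fixes \<phi> :: "'a::euclidean_space \<Rightarrow> real"
  assumes diff: "\<And>x. \<phi> differentiable (at x)" and cont: "continuous_on UNIV (grad \<phi>)"
    and K: "compact K" and e: "e > 0"
  obtains \<rho> where "\<rho> > 0"
    "\<And>x0 y. x0 \<in> K \<Longrightarrow> dist y x0 < \<rho> \<Longrightarrow> \<bar>\<phi> y - \<phi> x0 - grad \<phi> x0 \<bullet> (y - x0)\<bar> \<le> e * norm (y - x0)"
proof -
  obtain c R where KR: "K \<subseteq> cball c R"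
    using K compact_imp_bounded bounded_subset_cball by blast
  have "uniformly_continuous_on (cball c (R + 1)) (grad \<phi>)"
    using cont by (intro compact_uniformly_continuous) (auto intro: continuous_on_subset)
  then obtain \<rho>0 where \<rho>0: "\<rho>0 > 0"
    "\<And>x x'. x \<in> cball c (R + 1) \<Longrightarrow> x' \<in> cball c (R + 1) \<Longrightarrow> dist x' x < \<rho>0 \<Longrightarrow>
      dist (grad \<phi> x') (grad \<phi> x) < e"
    using e unfolding uniformly_continuous_on_def by metis
  define \<rho> where "\<rho> = min \<rho>0 1"
  have "\<bar>\<phi> y - \<phi> x0 - grad \<phi> x0 \<bullet> (y - x0)\<bar> \<le> e * norm (y - x0)"
    if x0: "x0 \<in> K" and y: "dist y x0 < \<rho>" for x0 y
  proof -
    have near: "x \<in> cball c (R + 1)" "dist x x0 < \<rho>0" if "x \<in> ball x0 \<rho>" for x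
      using that x0 KR dist_triangle[of c x x0] by (auto simp: \<rho>_def dist_commute subset_iff)
    have "norm (\<phi> y - \<phi> x0 - grad \<phi> x0 \<bullet> (y - x0)) \<le> norm (y - x0) * e"
    proof (rule differentiable_bound_linearization[where S="ball x0 \<rho>" and f'="\<lambda>x h. grad \<phi> x \<bullet> h"])
      show "x0 + t *\<^sub>R (y - x0) \<in> ball x0 \<rho>" if "t \<in> {0..1}" for t
        using that y by (auto simp: dist_norm dist_commute intro: le_less_trans[OF mult_left_le_one_le])
      show "(\<phi> has_derivative (\<lambda>h. grad \<phi> x \<bullet> h)) (at x within ball x0 \<rho>)" for x
        using has_derivative_grad[OF diff] has_derivative_at_withinI by blast
      show "onorm ((\<lambda>h. grad \<phi> x \<bullet> h) - (\<lambda>h. grad \<phi> x0 \<bullet> h)) \<le> e" if "x \<in> ball x0 \<rho>" for x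
      proof -
        have "(\<lambda>h. grad \<phi> x \<bullet> h) - (\<lambda>h. grad \<phi> x0 \<bullet> h) = (\<lambda>h. (grad \<phi> x - grad \<phi> x0) \<bullet> h)"
          by (auto simp: inner_diff_left)
        moreover have "onorm (\<lambda>h::'a. (grad \<phi> x - grad \<phi> x0) \<bullet> h) \<le> norm (grad \<phi> x - grad \<phi> x0)"
          using onorm_inner_right[OF bounded_linear_ident, of "grad \<phi> x - grad \<phi> x0"]
          by (simp add: onorm_id)
        moreover have "dist (grad \<phi> x) (grad \<phi> x0) < e"
          using \<rho>0(2) near[OF that] x0 KR by (auto simp: dist_commute)
        ultimately show ?thesis by (simp add: dist_norm)
      qed
      show "x0 \<in> ball x0 \<rho>" using \<rho>0(1) by (simp add: \<rho>_def)
    qed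
    then show ?thesis by (simp add: mult.commute)
  qed
  moreover have "\<rho> > 0" using \<rho>0(1) by (simp add: \<rho>_def)
  ultimately show thesis using that by blast
qed

lemma bounded_C1_domain_grad_bounds:
  assumes "bounded_C1_domain \<Omega> \<phi>"
  obtains m M where "0 < m" "0 < M"
    "\<And>x. x \<in> frontier \<Omega> \<Longrightarrow> m \<le> norm (grad \<phi> x) \<and> norm (grad \<phi> x) \<le> M"
proof -
  have cont: "continuous_on UNIV (grad \<phi>)" and nz: "\<And>x. \<phi> x = 0 \<Longrightarrow> grad \<phi> x \<noteq> 0"
    and "bounded \<Omega>"
    using assms unfolding bounded_C1_domain_def C1_defining_function_def by auto
  then have F: "compact (frontier \<Omega>)" by (simp add: compact_frontier_bounded)
  have cont_norm: "continuous_on (frontier \<Omega>) (\<lambda>x. norm (grad \<phi> x))"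
    using cont by (intro continuous_on_norm) (auto intro: continuous_on_subset)
  show thesis
  proof (cases "frontier \<Omega> = {}")
    case True
    then show ?thesis using that[of 1 1] by auto
  next
    case False
    obtain x1 where x1: "x1 \<in> frontier \<Omega>" "\<And>x. x \<in> frontier \<Omega> \<Longrightarrow> norm (grad \<phi> x1) \<le> norm (grad \<phi> x)"
      using continuous_attains_inf[OF F False cont_norm] by blast
    obtain x2 where x2: "x2 \<in> frontier \<Omega>" "\<And>x. x \<in> frontier \<Omega> \<Longrightarrow> norm (grad \<phi> x) \<le> norm (grad \<phi> x2)"
      using continuous_attains_sup[OF F False cont_norm] by blast
    have "0 < norm (grad \<phi> x1)"
      using nz bounded_C1_domain_frontier[OF assms x1(1)] by simp
    moreover have "0 < norm (grad \<phi> x2)"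
      using x2(2)[OF x1(1)] \<open>0 < norm (grad \<phi> x1)\<close> by linarith
    ultimately show ?thesis
      using that[of "norm (grad \<phi> x1)" "norm (grad \<phi> x2)"] x1(2) x2(2) by blast
  qed
qed

lemma bounded_C1_domain_inward_normal:
  assumes dom: "bounded_C1_domain \<Omega> \<phi>"
  obtains s1 where "s1 > 0"
    "\<And>x0 s. x0 \<in> frontier \<Omega> \<Longrightarrow> 0 < s \<Longrightarrow> s < s1 \<Longrightarrow> x0 - s *\<^sub>R grad \<phi> x0 \<in> \<Omega>"
proof -
  have diff: "\<And>x. \<phi> differentiable (at x)" and cont: "continuous_on UNIV (grad \<phi>)"
    and \<Omega>: "\<Omega> = {x. \<phi> x < 0}" and "bounded \<Omega>"
    using dom unfolding bounded_C1_domain_def C1_defining_function_def by auto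
  obtain m M where m: "0 < m" "0 < M"
    and gb: "\<And>x. x \<in> frontier \<Omega> \<Longrightarrow> m \<le> norm (grad \<phi> x) \<and> norm (grad \<phi> x) \<le> M"
    using bounded_C1_domain_grad_bounds[OF dom] by blast
  obtain \<rho> where \<rho>: "\<rho> > 0" and lin: "\<And>x0 y. x0 \<in> frontier \<Omega> \<Longrightarrow> dist y x0 < \<rho> \<Longrightarrow>
      \<bar>\<phi> y - \<phi> x0 - grad \<phi> x0 \<bullet> (y - x0)\<bar> \<le> m / 2 * norm (y - x0)"
    using uniform_linearization_on_compact[OF diff cont compact_frontier_bounded[OF \<open>bounded \<Omega>\<close>]]
      m by (metis divide_pos_pos zero_less_numeral)
  have "x0 - s *\<^sub>R grad \<phi> x0 \<in> \<Omega>" if x0: "x0 \<in> frontier \<Omega>" and s: "0 < s" "s < \<rho> / M" for x0 s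
  proof -
    define g where "g = grad \<phi> x0"
    define y where "y = x0 - s *\<^sub>R g"
    have g: "m \<le> norm g" "norm g \<le> M" using gb[OF x0] by (simp_all add: g_def)
    have ny: "norm (y - x0) = s * norm g" using s by (simp add: y_def)
    have "s * norm g \<le> s * M" using g s by (simp add: mult_left_mono)
    also have "\<dots> < \<rho>" using s m by (simp add: field_simps)
    finally have "dist y x0 < \<rho>" using ny by (simp add: dist_norm)
    then have "\<phi> y - \<phi> x0 - g \<bullet> (y - x0) \<le> m / 2 * norm (y - x0)"
      using abs_le_D1[OF lin[OF x0]] by (simp add: g_def)
    then have "\<phi> y \<le> \<phi> x0 + g \<bullet> (y - x0) + m / 2 * norm (y - x0)" by linarith
    also have "\<dots> = s * norm g * (m / 2 - norm g)"
      using bounded_C1_domain_frontier[OF dom x0] ny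
      by (simp add: y_def power2_norm_eq_inner[symmetric] power2_eq_square algebra_simps)
    also have "\<dots> < 0"
    proof (rule mult_pos_neg)
      show "0 < s * norm g" using g m s by (metis less_le_trans mult_pos_pos)
      show "m / 2 - norm g < 0" using g m by linarith
    qed
    finally show ?thesis using \<Omega> by (simp add: y_def g_def)
  qed
  moreover have "\<rho> / M > 0" using \<rho> m by simp
  ultimately show thesis using that by metis
qed

lemma bounded_C1_domain_nearest_sublevel_point:
  assumes dom: "bounded_C1_domain \<Omega> \<phi>"
  obtains \<delta> where "\<delta> > 0" "{x. \<phi> x \<le> -\<delta>} \<noteq> {}"
    "\<And>x0 y. x0 \<in> frontier \<Omega> \<Longrightarrow> \<phi> y \<le> -\<delta> \<Longrightarrow> dist x0 y = infdist x0 {x. \<phi> x \<le> -\<delta>} \<Longrightarrow>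
      (x0 - y) \<bullet> grad \<phi> x0 > 0"
proof -
  have diff: "\<And>x. \<phi> differentiable (at x)" and cont: "continuous_on UNIV (grad \<phi>)"
    and \<Omega>: "\<Omega> = {x. \<phi> x < 0}" and "bounded \<Omega>" "\<Omega> \<noteq> {}"
    using dom unfolding bounded_C1_domain_def C1_defining_function_def by auto
  obtain m M where m: "0 < m" "0 < M"
    and gb: "\<And>x. x \<in> frontier \<Omega> \<Longrightarrow> m \<le> norm (grad \<phi> x) \<and> norm (grad \<phi> x) \<le> M"
    using bounded_C1_domain_grad_bounds[OF dom] by blast
  obtain \<rho> where \<rho>: "\<rho> > 0" and lin: "\<And>x0 y. x0 \<in> frontier \<Omega> \<Longrightarrow> dist y x0 < \<rho> \<Longrightarrow>
      \<bar>\<phi> y - \<phi> x0 - grad \<phi> x0 \<bullet> (y - x0)\<bar> \<le> m / 4 * norm (y - x0)"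
    using uniform_linearization_on_compact[OF diff cont compact_frontier_bounded[OF \<open>bounded \<Omega>\<close>]]
      m by (metis divide_pos_pos zero_less_numeral)
  obtain p where "p \<in> \<Omega>" using \<open>\<Omega> \<noteq> {}\<close> by blast
  define \<delta> where "\<delta> = min (- \<phi> p) (\<rho> * m / 4)"
  define S where "S = {x. \<phi> x \<le> -\<delta>}"
  have \<delta>: "\<delta> > 0" using \<open>p \<in> \<Omega>\<close> \<Omega> \<rho> m by (simp add: \<delta>_def)
  have "p \<in> S" by (simp add: S_def \<delta>_def)
  define r where "r = 2 * \<delta> / m"
  have rm: "r * m = 2 * \<delta>" using m by (simp add: r_def)
  have "\<delta> \<le> \<rho> * m / 4" by (simp add: \<delta>_def)
  then have "r * m < \<rho> * m" using rm mult_pos_pos[OF \<rho> m(1)] by linarith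
  then have r: "0 < r" "r < \<rho>"
    using \<delta> m by (simp_all add: r_def divide_less_eq)
  have "(x0 - y) \<bullet> grad \<phi> x0 > 0"
    if x0: "x0 \<in> frontier \<Omega>" and y: "\<phi> y \<le> -\<delta>" "dist x0 y = infdist x0 S" for x0 y
  proof -
    define g where "g = grad \<phi> x0"
    have g: "m \<le> norm g" using gb[OF x0] by (simp add: g_def)
    have \<phi>x0: "\<phi> x0 = 0" using bounded_C1_domain_frontier[OF dom x0] .
    \<comment> \<open>The point at distance \<open>r\<close> along the inward normal already lies in \<open>S\<close>, so the
       nearest point \<open>y\<close> is \<open>r\<close>-close to \<open>x0\<close>, where the linearisation of \<open>\<phi>\<close> applies.\<close>
    define q where "q = x0 - (r / norm g) *\<^sub>R g"
    have "norm g > 0" using g m by linarith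
    then have nq: "norm (q - x0) = r" using r by (simp add: q_def)
    then have "\<phi> q - \<phi> x0 - g \<bullet> (q - x0) \<le> m / 4 * r"
      using abs_le_D1[OF lin[OF x0, of q]] r by (simp add: g_def dist_norm)
    then have "\<phi> q \<le> \<phi> x0 + g \<bullet> (q - x0) + m / 4 * r" by linarith
    also have "\<dots> = - r * norm g + m / 4 * r"
      using \<open>norm g > 0\<close> \<phi>x0 by (simp add: q_def power2_norm_eq_inner[symmetric] power2_eq_square)
    also have "\<dots> \<le> -\<delta>"
    proof -
      have "r * m \<le> r * norm g" using mult_left_mono[OF g, of r] r by simp
      moreover have "m / 4 * r = r * m / 4" by simp
      ultimately show ?thesis using rm \<delta> by linarith
    qed
    finally have "q \<in> S" by (simp add: S_def)
    then have "dist y x0 \<le> r"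
      using infdist_le[of q S x0] y(2) nq by (simp add: dist_commute dist_norm)
    then have "m / 4 * norm (y - x0) \<le> m / 4 * r"
      using m by (simp add: dist_norm norm_minus_commute)
    moreover have "\<phi> x0 + g \<bullet> (y - x0) - \<phi> y \<le> m / 4 * norm (y - x0)"
      using abs_le_D2[OF lin[OF x0, of y]] \<open>dist y x0 \<le> r\<close> r by (simp add: g_def)
    ultimately have "\<phi> y \<ge> \<phi> x0 + g \<bullet> (y - x0) - m / 4 * r" by linarith
    then have "g \<bullet> (y - x0) < 0" using y(1) \<phi>x0 rm \<delta> m by (simp add: field_simps)
    then show ?thesis by (simp add: g_def inner_diff_left inner_diff_right inner_commute)
  qed
  moreover have "{x. \<phi> x \<le> -\<delta>} \<noteq> {}" using \<open>p \<in> S\<close> by (auto simp: S_def)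
  ultimately show thesis using that[OF \<delta>] unfolding S_def by metis
qed

lemma deriv2_nonpos_at_local_max:
  fixes f F :: "real \<Rightarrow> real"
  assumes r: "r > 0" and max: "\<And>s. \<bar>s - x\<bar> < r \<Longrightarrow> f s \<le> f x"
    and f': "\<And>s. \<bar>s - x\<bar> < r \<Longrightarrow> (f has_real_derivative F s) (at s)"
    and F': "(F has_real_derivative c) (at x)"
  shows "c \<le> 0"
proof (rule ccontr)
  assume "\<not> c \<le> 0"
  then obtain e where e: "e > 0" "\<And>h. 0 < h \<Longrightarrow> h < e \<Longrightarrow> F x < F (x + h)"
    using DERIV_pos_inc_right[OF F'] by force
  have "(f has_real_derivative F x) (at x)" using f' r by simp
  then have "F x = 0"
    using DERIV_local_max[OF _ r] max by (metis abs_minus_commute)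
  define h where "h = min e r / 2"
  have h: "0 < h" "h < e" "h < r" using e r by (simp_all add: h_def)
  obtain z where z: "x < z" "z < x + h" "f (x + h) - f x = h * F z"
    using MVT2[of x "x + h" f F] h f' by force
  have "0 < h * F z" using e(2)[of "z - x"] z h \<open>F x = 0\<close> by simp
  then have "f x < f (x + h)" using z by simp
  moreover have "f (x + h) \<le> f x" using max h by simp
  ultimately show False by simp
qed

lemma deriv_nonpos_at_left_endpoint_max:
  fixes f :: "real \<Rightarrow> real"
  assumes "x < b" and max: "\<And>s. x \<le> s \<Longrightarrow> s < b \<Longrightarrow> f s \<le> f x"
    and f': "(f has_real_derivative c) (at x within {x..<b})"
  shows "c \<le> 0"
proof (rule ccontr)
  assume "\<not> c \<le> 0"
  then obtain e where e: "e > 0" "\<And>h. 0 < h \<Longrightarrow> x + h \<in> {x..<b} \<Longrightarrow> h < e \<Longrightarrow> f x < f (x + h)"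
    using has_real_derivative_pos_inc_right[OF f'] by force
  define h where "h = min e (b - x) / 2"
  have "0 < h" "h < e" "h < b - x" using e \<open>x < b\<close> by (simp_all add: h_def)
  then show False using e(2)[of h] max[of "x + h"] by simp
qed

lemma deriv_nonneg_at_right_endpoint_max:
  fixes f :: "real \<Rightarrow> real"
  assumes "a < x" and max: "\<And>s. a < s \<Longrightarrow> s < x \<Longrightarrow> f s \<le> f x"
    and f': "(f has_real_derivative c) (at x)"
  shows "c \<ge> 0"
proof (rule ccontr)
  assume "\<not> c \<ge> 0"
  then obtain e where e: "e > 0" "\<And>h. 0 < h \<Longrightarrow> h < e \<Longrightarrow> f x < f (x - h)"
    using has_real_derivative_neg_dec_left[OF f'] by force
  define h where "h = min e (x - a) / 2"
  have "0 < h" "h < e" "h < x - a" using e \<open>a < x\<close> by (simp_all add: h_def)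
  then show False using e(2)[of h] max[of "x - h"] by simp
qed

lemma has_real_derivative_along_line:
  fixes f :: "'a::real_normed_vector \<Rightarrow> real"
  assumes "(f has_derivative D) (at (x0 + s *\<^sub>R b))"
  shows "((\<lambda>s. f (x0 + s *\<^sub>R b)) has_real_derivative D b) (at s)"
proof -
  have line: "((\<lambda>s. x0 + s *\<^sub>R b) has_derivative (\<lambda>u. u *\<^sub>R b)) (at s)"
    by (auto intro!: derivative_eq_intros)
  have "linear D" using assms has_derivative_linear by blast
  then have "(\<lambda>u. D (u *\<^sub>R b)) = (\<lambda>u. D b * u)"
    by (auto simp: linear_scale)
  then show ?thesis
    using has_derivative_compose[OF line assms] by (simp add: has_field_derivative_def)
qed

lemma has_real_derivative_inner_self_along_line:
  fixes x b :: "'a::real_inner"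
  shows "((\<lambda>s. (x + s *\<^sub>R b) \<bullet> (x + s *\<^sub>R b)) has_real_derivative 2 * ((x + s *\<^sub>R b) \<bullet> b)) (at s)"
proof -
  have "(\<lambda>s. (x + s *\<^sub>R b) \<bullet> (x + s *\<^sub>R b)) = (\<lambda>s. x \<bullet> x + 2 * s * (x \<bullet> b) + s\<^sup>2 * (b \<bullet> b))"
    by (auto simp: algebra_simps inner_commute power2_eq_square)
  moreover have "((\<lambda>s. x \<bullet> x + 2 * s * (x \<bullet> b) + s\<^sup>2 * (b \<bullet> b)) has_real_derivative
      2 * (x \<bullet> b) + 2 * s * (b \<bullet> b)) (at s)"
    by (auto intro!: derivative_eq_intros)
  ultimately show ?thesis by (simp add: algebra_simps inner_commute)
qed

lemma laplacian_le_at_penalized_max: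
  fixes f :: "'a::euclidean_space \<Rightarrow> real"
  assumes r: "r > 0"
    and diff: "\<And>x. x \<in> ball x0 r \<Longrightarrow> f differentiable (at x)"
    and diff2: "\<And>b. b \<in> Basis \<Longrightarrow> (\<lambda>x. frechet_derivative f (at x) b) differentiable (at x0)"
    and max: "\<And>x. x \<in> ball x0 r \<Longrightarrow>
      a * f x - \<epsilon> * ((x - p) \<bullet> (x - p)) \<le> a * f x0 - \<epsilon> * ((x0 - p) \<bullet> (x0 - p))"
  shows "a * laplacian f x0 \<le> 2 * \<epsilon> * DIM('a)"
proof -
  have "a * frechet_derivative (\<lambda>x. frechet_derivative f (at x) b) (at x0) b \<le> 2 * \<epsilon>"
    if b: "b \<in> Basis" for b
  proof -
    let ?x = "\<lambda>s. x0 + s *\<^sub>R b"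
    have line: "?x s - p = (x0 - p) + s *\<^sub>R b" for s by simp
    have on_line: "?x s \<in> ball x0 r" if "\<bar>s - 0\<bar> < r" for s
      using b that by (simp add: dist_norm)
    define F where "F s = a * frechet_derivative f (at (?x s)) b - \<epsilon> * (2 * ((?x s - p) \<bullet> b))" for s
    have D1: "((\<lambda>s. a * f (?x s) - \<epsilon> * ((?x s - p) \<bullet> (?x s - p))) has_real_derivative F s) (at s)"
      if "\<bar>s - 0\<bar> < r" for s
    proof -
      have "((\<lambda>s. f (?x s)) has_real_derivative frechet_derivative f (at (?x s)) b) (at s)"
        using has_real_derivative_along_line diff[OF on_line[OF that]] frechet_derivative_works
        by blast
      then show ?thesis
        unfolding F_def line
        by (intro DERIV_diff DERIV_cmult has_real_derivative_inner_self_along_line)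
    qed
    have D2: "(F has_real_derivative
        a * frechet_derivative (\<lambda>x. frechet_derivative f (at x) b) (at x0) b - \<epsilon> * (2 * (b \<bullet> b))) (at 0)"
    proof -
      have "((\<lambda>x. frechet_derivative f (at x) b) has_derivative
          frechet_derivative (\<lambda>x. frechet_derivative f (at x) b) (at x0)) (at (x0 + 0 *\<^sub>R b))"
        using frechet_derivative_works[THEN iffD1, OF diff2[OF b]] by simp
      from has_real_derivative_along_line[OF this]
      have D2: "((\<lambda>s. frechet_derivative f (at (?x s)) b) has_real_derivative
          frechet_derivative (\<lambda>x. frechet_derivative f (at x) b) (at x0) b) (at 0)" .
      have "((\<lambda>s. (?x s - p) \<bullet> b) has_real_derivative b \<bullet> b) (at 0)"
        unfolding line inner_add_left by (auto intro!: derivative_eq_intros)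
      with D2 show ?thesis unfolding F_def by (intro DERIV_diff DERIV_cmult)
    qed
    have "a * frechet_derivative (\<lambda>x. frechet_derivative f (at x) b) (at x0) b
        - \<epsilon> * (2 * (b \<bullet> b)) \<le> 0"
    proof (rule deriv2_nonpos_at_local_max[OF r _ D1 D2])
      show "a * f (?x s) - \<epsilon> * ((?x s - p) \<bullet> (?x s - p))
          \<le> a * f (?x 0) - \<epsilon> * ((?x 0 - p) \<bullet> (?x 0 - p))" if "\<bar>s - 0\<bar> < r" for s
        using max[OF on_line[OF that]] by simp
    qed
    then show ?thesis using b by simp
  qed
  then have "(\<Sum>b\<in>Basis. a * frechet_derivative (\<lambda>x. frechet_derivative f (at x) b) (at x0) b)
      \<le> of_nat DIM('a) * (2 * \<epsilon>)"
    by (intro sum_bounded_above) auto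
  then show ?thesis by (simp add: laplacian_def sum_distrib_left mult.commute)
qed

lemma inner_grad_nonpos_at_penalized_max:
  fixes f :: "'a::real_inner \<Rightarrow> real"
  assumes s1: "s1 > 0" and seg: "\<And>s. 0 \<le> s \<Longrightarrow> s < s1 \<Longrightarrow> x0 - s *\<^sub>R g \<in> A"
    and f': "(f has_derivative D) (at x0 within A)" and "D g = 0" and "\<epsilon> > 0"
    and max: "\<And>x. x \<in> A \<Longrightarrow>
      a * f x - \<epsilon> * ((x - p) \<bullet> (x - p)) \<le> a * f x0 - \<epsilon> * ((x0 - p) \<bullet> (x0 - p))"
  shows "(x0 - p) \<bullet> g \<le> 0"
proof -
  let ?x = "\<lambda>s. x0 + s *\<^sub>R (- g)"
  have line: "?x s - p = (x0 - p) + s *\<^sub>R (- g)" for s by simp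
  have in_A: "?x s \<in> A" if "0 \<le> s" "s < s1" for s using seg that by simp
  have D0: "((\<lambda>s. f (?x s)) has_real_derivative 0) (at 0 within {0..<s1})"
  proof -
    have "(?x has_derivative (\<lambda>u. u *\<^sub>R (- g))) (at 0 within {0..<s1})"
      by (auto intro!: derivative_eq_intros)
    moreover have "?x ` {0..<s1} \<subseteq> A" using in_A by auto
    then have "(f has_derivative D) (at (?x 0) within ?x ` {0..<s1})"
      using has_derivative_subset[OF f'] by simp
    ultimately have "((f \<circ> ?x) has_derivative (D \<circ> (\<lambda>u. u *\<^sub>R (- g)))) (at 0 within {0..<s1})"
      by (rule diff_chain_within)
    moreover have "D \<circ> (\<lambda>u. u *\<^sub>R (- g)) = (*) 0"
      using has_derivative_linear[OF f'] \<open>D g = 0\<close> by (auto simp: linear_scale linear_neg)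
    ultimately show ?thesis by (simp add: has_field_derivative_def comp_def)
  qed
  moreover have "((\<lambda>s. (?x s - p) \<bullet> (?x s - p)) has_real_derivative 2 * ((x0 - p) \<bullet> (- g)))
      (at 0 within {0..<s1})"
    unfolding line
    using has_real_derivative_inner_self_along_line[of "x0 - p" "- g" 0]
    by (simp add: has_field_derivative_at_within)
  ultimately have "((\<lambda>s. a * f (?x s) - \<epsilon> * ((?x s - p) \<bullet> (?x s - p))) has_real_derivative
      a * 0 - \<epsilon> * (2 * ((x0 - p) \<bullet> (- g)))) (at 0 within {0..<s1})"
    by (intro DERIV_diff DERIV_cmult)
  moreover have "a * f (?x s) - \<epsilon> * ((?x s - p) \<bullet> (?x s - p))
      \<le> a * f (?x 0) - \<epsilon> * ((?x 0 - p) \<bullet> (?x 0 - p))" if "0 \<le> s" "s < s1" for s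
    using max[OF in_A[OF that]] by simp
  ultimately have "a * 0 - \<epsilon> * (2 * ((x0 - p) \<bullet> (- g))) \<le> 0"
    by (intro deriv_nonpos_at_left_endpoint_max[OF s1])
  then show ?thesis using \<open>\<epsilon> > 0\<close> by (simp add: mult_le_0_iff)
qed

definition neumann_rd_solution ::
  "'a::euclidean_space set \<Rightarrow> ('a \<Rightarrow> real) \<Rightarrow> real \<Rightarrow> ('a \<Rightarrow> real \<Rightarrow> real) \<Rightarrow> ('a \<Rightarrow> real \<Rightarrow> real) \<Rightarrow> bool"
where
  "neumann_rd_solution \<Omega> \<phi> d G y \<longleftrightarrow>
     continuous_on (closure \<Omega> \<times> {0..}) (\<lambda>(x, t). y x t) \<and>
     (\<forall>t>0. \<forall>x\<in>\<Omega>. (\<lambda>z. y z t) differentiable (at x) \<and>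
        (\<forall>b\<in>Basis. (\<lambda>z. frechet_derivative (\<lambda>z. y z t) (at z) b) differentiable (at x)) \<and>
        ((\<lambda>s. y x s) has_real_derivative (d * laplacian (\<lambda>z. y z t) x + y x t * G x t)) (at t)) \<and>
     (\<forall>t>0. \<forall>x\<in>frontier \<Omega>.
        \<exists>D. ((\<lambda>z. y z t) has_derivative D) (at x within closure \<Omega>) \<and> D (grad \<phi> x) = 0)"

lemma penalized_max_at_nearest_point:
  fixes f :: "'a::real_inner \<Rightarrow> real"
  assumes p: "p \<in> S" "infdist x0 S = dist x0 p" and "\<epsilon> \<ge> 0"
    and max: "\<And>x. x \<in> A \<Longrightarrow> f x - \<epsilon> * (infdist x S)\<^sup>2 \<le> f x0 - \<epsilon> * (infdist x0 S)\<^sup>2"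
    and "x \<in> A"
  shows "f x - \<epsilon> * ((x - p) \<bullet> (x - p)) \<le> f x0 - \<epsilon> * ((x0 - p) \<bullet> (x0 - p))"
proof -
  have "(infdist x S)\<^sup>2 \<le> (x - p) \<bullet> (x - p)"
    using power_mono[OF infdist_le[OF p(1), of x] infdist_nonneg, of 2]
    by (simp add: dist_norm power2_norm_eq_inner)
  then have "\<epsilon> * (infdist x S)\<^sup>2 \<le> \<epsilon> * ((x - p) \<bullet> (x - p))" using \<open>\<epsilon> \<ge> 0\<close> by (rule mult_left_mono)
  moreover have "(infdist x0 S)\<^sup>2 = (x0 - p) \<bullet> (x0 - p)"
    using p(2) by (simp add: dist_norm power2_norm_eq_inner)
  ultimately show ?thesis using max[OF \<open>x \<in> A\<close>] by simp
qed

lemma neumann_rd_interior_penalized_max: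
  fixes \<Omega> :: "'a::euclidean_space set" and y G :: "'a \<Rightarrow> real \<Rightarrow> real"
  assumes sol: "neumann_rd_solution \<Omega> \<phi> d G y" and d: "d \<ge> 0" and "open \<Omega>"
    and x0: "x0 \<in> \<Omega>" and \<tau>: "0 \<le> t0" "t0 < \<tau>" and h': "(h has_real_derivative h'\<tau>) (at \<tau>)"
    and time_max: "\<And>t. t0 < t \<Longrightarrow> t < \<tau> \<Longrightarrow>
      exp (- \<mu> * t) * (\<sigma> * y x0 t + h t) \<le> exp (- \<mu> * \<tau>) * (\<sigma> * y x0 \<tau> + h \<tau>)"
    and space_max: "\<And>x. x \<in> \<Omega> \<Longrightarrow> exp (- \<mu> * \<tau>) * \<sigma> * y x \<tau> - \<epsilon> * ((x - p) \<bullet> (x - p))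
      \<le> exp (- \<mu> * \<tau>) * \<sigma> * y x0 \<tau> - \<epsilon> * ((x0 - p) \<bullet> (x0 - p))"
    and growth: "\<sigma> * (y x0 \<tau> * G x0 \<tau>) + h'\<tau> \<le> (\<mu> - 1) * (\<sigma> * y x0 \<tau> + h \<tau>)"
  shows "exp (- \<mu> * \<tau>) * (\<sigma> * y x0 \<tau> + h \<tau>) \<le> 2 * \<epsilon> * d * DIM('a)"
proof -
  define E where "E = exp (- \<mu> * \<tau>)"
  define w where "w t = \<sigma> * y x0 t + h t" for t
  define \<Delta> where "\<Delta> = laplacian (\<lambda>x. y x \<tau>) x0"
  have "\<tau> > 0" using \<tau> by simp
  then have diff_y: "\<And>x. x \<in> \<Omega> \<Longrightarrow> (\<lambda>x. y x \<tau>) differentiable (at x)"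
    and diff2_y: "\<And>b. b \<in> Basis \<Longrightarrow> (\<lambda>x. frechet_derivative (\<lambda>x. y x \<tau>) (at x) b) differentiable (at x0)"
    and y_t: "((\<lambda>t. y x0 t) has_real_derivative d * \<Delta> + y x0 \<tau> * G x0 \<tau>) (at \<tau>)"
    using sol x0 unfolding neumann_rd_solution_def \<Delta>_def by blast+
  have "0 \<le> E * (- \<mu>) * w \<tau> + E * (\<sigma> * (d * \<Delta> + y x0 \<tau> * G x0 \<tau>) + h'\<tau>)"
  proof (rule deriv_nonneg_at_right_endpoint_max[of t0])
    show "exp (- \<mu> * t) * w t \<le> exp (- \<mu> * \<tau>) * w \<tau>" if "t0 < t" "t < \<tau>" for t
      using time_max that by (simp add: w_def)
    show "((\<lambda>t. exp (- \<mu> * t) * w t) has_real_derivative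
        E * (- \<mu>) * w \<tau> + E * (\<sigma> * (d * \<Delta> + y x0 \<tau> * G x0 \<tau>) + h'\<tau>)) (at \<tau>)"
      unfolding w_def E_def using y_t h' by (auto intro!: derivative_eq_intros simp: algebra_simps)
  qed (use \<tau> in simp)
  also have "\<dots> = E * (\<sigma> * d * \<Delta> + (\<sigma> * (y x0 \<tau> * G x0 \<tau>) + h'\<tau>) - \<mu> * w \<tau>)"
    by (simp add: algebra_simps)
  finally have "0 \<le> \<sigma> * d * \<Delta> + (\<sigma> * (y x0 \<tau> * G x0 \<tau>) + h'\<tau>) - \<mu> * w \<tau>"
    by (simp add: zero_le_mult_iff E_def)
  then have "w \<tau> \<le> d * (\<sigma> * \<Delta>)"
    using growth by (simp add: w_def algebra_simps)
  obtain r where r: "r > 0" "ball x0 r \<subseteq> \<Omega>" using \<open>open \<Omega>\<close> x0 open_contains_ball by blast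
  have lap: "E * \<sigma> * \<Delta> \<le> 2 * \<epsilon> * DIM('a)"
    unfolding \<Delta>_def E_def
    by (rule laplacian_le_at_penalized_max[OF r(1) diff_y diff2_y space_max]) (use r(2) in blast)+
  have "E * w \<tau> \<le> d * (E * \<sigma> * \<Delta>)"
    using mult_left_mono[OF \<open>w \<tau> \<le> d * (\<sigma> * \<Delta>)\<close>, of E] by (simp add: E_def algebra_simps)
  also have "\<dots> \<le> d * (2 * \<epsilon> * DIM('a))" by (rule mult_left_mono[OF lap d])
  finally show ?thesis by (simp add: E_def w_def mult_ac)
qed

lemma neumann_rd_frontier_penalized_max:
  fixes \<Omega> :: "'a::euclidean_space set" and y G :: "'a \<Rightarrow> real \<Rightarrow> real"
  assumes dom: "bounded_C1_domain \<Omega> \<phi>" and sol: "neumann_rd_solution \<Omega> \<phi> d G y"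
    and x0: "x0 \<in> frontier \<Omega>" and "\<tau> > 0" and "\<epsilon> > 0"
    and space_max: "\<And>x. x \<in> closure \<Omega> \<Longrightarrow> a * y x \<tau> - \<epsilon> * ((x - p) \<bullet> (x - p))
      \<le> a * y x0 \<tau> - \<epsilon> * ((x0 - p) \<bullet> (x0 - p))"
  shows "(x0 - p) \<bullet> grad \<phi> x0 \<le> 0"
proof -
  obtain D where D: "((\<lambda>x. y x \<tau>) has_derivative D) (at x0 within closure \<Omega>)" "D (grad \<phi> x0) = 0"
    using sol x0 \<open>\<tau> > 0\<close> unfolding neumann_rd_solution_def by blast
  obtain s1 where s1: "s1 > 0"
    and inward: "\<And>s. 0 < s \<Longrightarrow> s < s1 \<Longrightarrow> x0 - s *\<^sub>R grad \<phi> x0 \<in> \<Omega>"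
    using bounded_C1_domain_inward_normal[OF dom] x0 by metis
  have "x0 \<in> closure \<Omega>" using x0 by (simp add: frontier_def)
  then have "x0 - s *\<^sub>R grad \<phi> x0 \<in> closure \<Omega>" if "0 \<le> s" "s < s1" for s
    using inward[of s] closure_subset that by (cases "s = 0") auto
  then show ?thesis
    using inner_grad_nonpos_at_penalized_max[OF s1 _ D \<open>\<epsilon> > 0\<close> space_max] by simp
qed

lemma continuous_attains_max_on_cylinder:
  fixes f :: "'a::topological_space \<Rightarrow> real \<Rightarrow> real"
  assumes "compact A" "x1 \<in> A" "t0 \<le> T" and cont: "continuous_on (A \<times> {t0..T}) (\<lambda>q. f (fst q) (snd q))"
  obtains x0 \<tau> where "x0 \<in> A" "t0 \<le> \<tau>" "\<tau> \<le> T"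
    "\<And>x t. x \<in> A \<Longrightarrow> t0 \<le> t \<Longrightarrow> t \<le> T \<Longrightarrow> f x t \<le> f x0 \<tau>"
proof -
  have "compact (A \<times> {t0..T})" using assms(1) by (simp add: compact_Times)
  moreover have "A \<times> {t0..T} \<noteq> {}" using assms(2,3) by auto
  ultimately obtain q where "q \<in> A \<times> {t0..T}" "\<forall>q'\<in>A \<times> {t0..T}. f (fst q') (snd q') \<le> f (fst q) (snd q)"
    using continuous_attains_sup[OF _ _ cont] by meson
  then show thesis using that[of "fst q" "snd q"] by (cases q) auto
qed

lemma neumann_rd_comparison:
  fixes \<Omega> :: "'a::euclidean_space set" and y G :: "'a \<Rightarrow> real \<Rightarrow> real"
  assumes dom: "bounded_C1_domain \<Omega> \<phi>" and d: "d \<ge> 0" and sol: "neumann_rd_solution \<Omega> \<phi> d G y"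
    and "t0 \<ge> 0" and h': "\<And>t. (h has_real_derivative h' t) (at t)"
    and init: "\<And>x. x \<in> closure \<Omega> \<Longrightarrow> \<sigma> * y x t0 + h t0 \<le> 0"
    and ineq: "\<And>t x. t0 < t \<Longrightarrow> t \<le> T \<Longrightarrow> x \<in> \<Omega> \<Longrightarrow> \<sigma> * y x t + h t > 0 \<Longrightarrow>
      \<sigma> * (y x t * G x t) + h' t \<le> L * (\<sigma> * y x t + h t)"
    and t1: "t0 \<le> t1" "t1 \<le> T" and x1: "x1 \<in> closure \<Omega>"
  shows "\<sigma> * y x1 t1 + h t1 \<le> 0"
proof (rule ccontr)
  define w where "w x t = \<sigma> * y x t + h t" for x t
  assume "\<not> \<sigma> * y x1 t1 + h t1 \<le> 0"
  then have w1: "w x1 t1 > 0" by (simp add: w_def)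
  have "open \<Omega>" "bounded \<Omega>" and diff: "\<And>x. \<phi> differentiable (at x)"
    using dom unfolding bounded_C1_domain_def C1_defining_function_def by auto
  obtain \<delta> where \<delta>: "\<delta> > 0" "{x. \<phi> x \<le> -\<delta>} \<noteq> {}"
    and nearest: "\<And>x0 p. x0 \<in> frontier \<Omega> \<Longrightarrow> \<phi> p \<le> -\<delta> \<Longrightarrow>
      dist x0 p = infdist x0 {x. \<phi> x \<le> -\<delta>} \<Longrightarrow> (x0 - p) \<bullet> grad \<phi> x0 > 0"
    using bounded_C1_domain_nearest_sublevel_point[OF dom] by blast
  define S where "S = {x. \<phi> x \<le> -\<delta>}"
  have "closed S" "S \<noteq> {}"
    using diff \<delta>(2) unfolding S_def
    by (simp_all add: closed_Collect_le differentiable_imp_continuous_within continuous_at_imp_continuous_on)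
  define \<mu> where "\<mu> = \<bar>L\<bar> + 1"
  define K where "K = 2 * d * DIM('a) + 1"
  define \<epsilon> where "\<epsilon> = exp (- \<mu> * t1) * w x1 t1 / (2 * ((infdist x1 S)\<^sup>2 + K))"
  define z where "z x t = exp (- \<mu> * t) * w x t - \<epsilon> * ((infdist x S)\<^sup>2 + K)" for x t
  have "K \<ge> 1" using d by (simp add: K_def)
  then have "\<epsilon> > 0" using w1 by (simp add: \<epsilon>_def add_nonneg_pos)
  have "0 < (infdist x1 S)\<^sup>2 + K" using \<open>K \<ge> 1\<close> by (simp add: add_nonneg_pos)
  then have "\<epsilon> * ((infdist x1 S)\<^sup>2 + K) = exp (- \<mu> * t1) * w x1 t1 / 2"
    by (simp add: \<epsilon>_def field_simps)
  moreover have "0 < exp (- \<mu> * t1) * w x1 t1" using w1 by simp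
  ultimately have "z x1 t1 > 0" by (simp add: z_def)
  obtain x0 \<tau> where x0: "x0 \<in> closure \<Omega>" and \<tau>: "t0 \<le> \<tau>" "\<tau> \<le> T"
    and z_max: "\<And>x t. x \<in> closure \<Omega> \<Longrightarrow> t0 \<le> t \<Longrightarrow> t \<le> T \<Longrightarrow> z x t \<le> z x0 \<tau>"
  proof (rule continuous_attains_max_on_cylinder[OF _ x1 order_trans[OF t1]])
    have cont_h: "continuous_on UNIV h"
      using h' by (intro continuous_at_imp_continuous_on ballI DERIV_continuous)
    have cont_y: "continuous_on (closure \<Omega> \<times> {t0..T}) (\<lambda>q. y (fst q) (snd q))"
      using sol \<open>t0 \<ge> 0\<close> unfolding neumann_rd_solution_def
      by (auto simp: case_prod_beta' intro: continuous_on_subset)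
    have cont_\<psi>: "continuous_on UNIV (\<lambda>x. (infdist x S)\<^sup>2)" by (intro continuous_intros)
    show "continuous_on (closure \<Omega> \<times> {t0..T}) (\<lambda>q. z (fst q) (snd q))"
      unfolding z_def w_def
      by (intro continuous_intros cont_y continuous_on_compose2[OF cont_h]
          continuous_on_compose2[OF cont_\<psi>]) auto
  qed (use \<open>bounded \<Omega>\<close> in auto)
  define E where "E = exp (- \<mu> * \<tau>)"
  have "E * w x0 \<tau> > \<epsilon> * K"
  proof -
    have "E * w x0 \<tau> - \<epsilon> * ((infdist x0 S)\<^sup>2 + K) > 0"
      using z_max[OF x1 t1] \<open>z x1 t1 > 0\<close> by (simp add: z_def E_def)
    moreover have "\<epsilon> * (infdist x0 S)\<^sup>2 \<ge> 0" using \<open>\<epsilon> > 0\<close> by simp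
    ultimately show ?thesis unfolding distrib_left by linarith
  qed
  moreover have "\<epsilon> * K > 0" using \<open>\<epsilon> > 0\<close> \<open>K \<ge> 1\<close> by simp
  ultimately have "E * w x0 \<tau> > 0" by linarith
  then have "w x0 \<tau> > 0" by (simp add: E_def zero_less_mult_iff)
  then have "\<tau> \<noteq> t0" using init[OF x0] by (auto simp: w_def)
  then have \<tau>0: "t0 < \<tau>" "\<tau> > 0" using \<tau> \<open>t0 \<ge> 0\<close> by simp_all
  obtain p where p: "p \<in> S" "infdist x0 S = dist x0 p"
    using infdist_attains_inf[OF \<open>closed S\<close> \<open>S \<noteq> {}\<close>, of x0] by blast
  have space_max: "E * \<sigma> * y x \<tau> - \<epsilon> * ((x - p) \<bullet> (x - p))
      \<le> E * \<sigma> * y x0 \<tau> - \<epsilon> * ((x0 - p) \<bullet> (x0 - p))" if "x \<in> closure \<Omega>" for x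
    using p less_imp_le[OF \<open>\<epsilon> > 0\<close>] _ that
  proof (rule penalized_max_at_nearest_point)
    show "E * \<sigma> * y x \<tau> - \<epsilon> * (infdist x S)\<^sup>2 \<le> E * \<sigma> * y x0 \<tau> - \<epsilon> * (infdist x0 S)\<^sup>2"
      if "x \<in> closure \<Omega>" for x
      using z_max[OF that \<tau>] by (simp add: z_def w_def E_def algebra_simps)
  qed
  show False
  proof (cases "x0 \<in> \<Omega>")
    case True
    have "E * w x0 \<tau> \<le> 2 * \<epsilon> * d * DIM('a)"
      unfolding E_def w_def
    proof (rule neumann_rd_interior_penalized_max[OF sol d \<open>open \<Omega>\<close> True \<open>t0 \<ge> 0\<close> \<tau>0(1) h'])
      show "exp (- \<mu> * t) * (\<sigma> * y x0 t + h t) \<le> exp (- \<mu> * \<tau>) * (\<sigma> * y x0 \<tau> + h \<tau>)"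
        if "t0 < t" "t < \<tau>" for t
        using z_max[OF x0, of t] that \<tau> by (simp add: z_def w_def)
      have "\<sigma> * (y x0 \<tau> * G x0 \<tau>) + h' \<tau> \<le> L * w x0 \<tau>"
        using ineq[OF \<tau>0(1) \<tau>(2) True] \<open>w x0 \<tau> > 0\<close> by (simp add: w_def)
      moreover have "L * w x0 \<tau> \<le> \<bar>L\<bar> * w x0 \<tau>" using \<open>w x0 \<tau> > 0\<close> by (intro mult_right_mono) auto
      moreover have "(\<mu> - 1) * (\<sigma> * y x0 \<tau> + h \<tau>) = \<bar>L\<bar> * w x0 \<tau>" by (simp add: \<mu>_def w_def)
      ultimately show "\<sigma> * (y x0 \<tau> * G x0 \<tau>) + h' \<tau> \<le> (\<mu> - 1) * (\<sigma> * y x0 \<tau> + h \<tau>)"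
        by linarith
    qed (use space_max closure_subset in \<open>auto simp: E_def\<close>)
    also have "\<dots> < \<epsilon> * K" using \<open>\<epsilon> > 0\<close> by (simp add: K_def algebra_simps)
    finally show False using \<open>E * w x0 \<tau> > \<epsilon> * K\<close> by simp
  next
    case False
    then have x0F: "x0 \<in> frontier \<Omega>" using x0 \<open>open \<Omega>\<close> by (simp add: frontier_def interior_open)
    have "(x0 - p) \<bullet> grad \<phi> x0 \<le> 0"
      by (rule neumann_rd_frontier_penalized_max[OF dom sol x0F \<tau>0(2) \<open>\<epsilon> > 0\<close> space_max])
    moreover have "(x0 - p) \<bullet> grad \<phi> x0 > 0"
      using nearest[OF x0F] p unfolding S_def by simp
    ultimately show False by simp
  qed
qed

lemma bounded_on_finite_time:
  fixes y :: "'a::euclidean_space \<Rightarrow> real \<Rightarrow> real"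
  assumes "bounded \<Omega>" and cont: "continuous_on (closure \<Omega> \<times> {0..}) (\<lambda>(x, t). y x t)"
  obtains M where "\<And>x t. x \<in> closure \<Omega> \<Longrightarrow> 0 \<le> t \<Longrightarrow> t \<le> T \<Longrightarrow> \<bar>y x t\<bar> \<le> M"
proof -
  have "compact ((\<lambda>(x, t). y x t) ` (closure \<Omega> \<times> {0..T}))"
    using assms by (intro compact_continuous_image compact_Times) (auto intro: continuous_on_subset)
  then obtain M where M: "\<forall>q\<in>closure \<Omega> \<times> {0..T}. \<bar>(\<lambda>(x, t). y x t) q\<bar> \<le> M"
    by (auto dest!: compact_imp_bounded simp: bounded_iff)
  show thesis
  proof (rule that)
    show "\<bar>y x t\<bar> \<le> M" if "x \<in> closure \<Omega>" "0 \<le> t" "t \<le> T" for x t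
      using M[rule_format, of "(x, t)"] that by simp
  qed
qed

lemma continuous_on_time_slice:
  assumes "continuous_on (A \<times> {0..}) (\<lambda>(x, t). y x t)" "0 \<le> t0"
  shows "continuous_on A (\<lambda>x. y x t0)"
  using continuous_on_compose2[OF assms(1) continuous_on_Pair[OF continuous_on_id continuous_on_const]]
    assms(2) by auto

lemma compact_pos_lower_bound:
  fixes f :: "'a::topological_space \<Rightarrow> real"
  assumes "compact K" "continuous_on K f" "\<And>x. x \<in> K \<Longrightarrow> f x > 0"
  obtains m where "m > 0" "\<And>x. x \<in> K \<Longrightarrow> m \<le> f x"
proof (cases "K = {}")
  case False
  then obtain x1 where "x1 \<in> K" "\<forall>x\<in>K. f x1 \<le> f x"
    using continuous_attains_inf[OF assms(1) False assms(2)] by blast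
  then show thesis using that[of "f x1"] assms(3) by blast
qed (use that[of 1] in simp)

lemma neumann_rd_positive:
  fixes \<Omega> :: "'a::euclidean_space set" and y G :: "'a \<Rightarrow> real \<Rightarrow> real"
  assumes dom: "bounded_C1_domain \<Omega> \<phi>" and d: "d \<ge> 0" and sol: "neumann_rd_solution \<Omega> \<phi> d G y"
    and c: "c > 0" and init: "\<And>x. x \<in> closure \<Omega> \<Longrightarrow> c \<le> y x 0"
    and G_bounded: "\<And>T. \<exists>L. \<forall>t\<in>{0<..T}. \<forall>x\<in>\<Omega>. \<bar>G x t\<bar> \<le> L"
    and "0 \<le> t" "x \<in> closure \<Omega>"
  shows "y x t > 0"
proof -
  obtain L0 where "\<forall>s\<in>{0<..t}. \<forall>x\<in>\<Omega>. \<bar>G x s\<bar> \<le> L0" using G_bounded by blast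
  then obtain L where L: "L \<ge> 0" "\<And>s x. 0 < s \<Longrightarrow> s \<le> t \<Longrightarrow> x \<in> \<Omega> \<Longrightarrow> \<bar>G x s\<bar> \<le> L"
    by (metis abs_ge_zero greaterThanAtMost_iff order_trans)
  define h where "h s = c * exp (- L * s)" for s
  have h': "(h has_real_derivative - L * h s) (at s)" for s
    unfolding h_def by (auto intro!: derivative_eq_intros)
  have "(-1) * y x t + h t \<le> 0"
  proof (rule neumann_rd_comparison[OF dom d sol order_refl h'])
    show "(-1) * y x 0 + h 0 \<le> 0" if "x \<in> closure \<Omega>" for x
      using init[OF that] by (simp add: h_def)
    show "(-1) * (y x s * G x s) + - L * h s \<le> L * ((-1) * y x s + h s)"
      if "0 < s" "s \<le> t" "x \<in> \<Omega>" "(-1) * y x s + h s > 0" for s x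
    proof -
      have "\<bar>G x s\<bar> \<le> L" using L(2) that(1-3) .
      moreover have "h s \<ge> 0" using c by (simp add: h_def)
      ultimately have "(h s - y x s) * G x s \<le> (h s - y x s) * L" "0 \<le> h s * (G x s + L)"
        using that(4) by (auto intro: mult_left_mono)
      then show ?thesis by (simp add: algebra_simps)
    qed
  qed (use assms in auto)
  moreover have "h t > 0" using c by (simp add: h_def)
  ultimately show ?thesis by simp
qed

lemma neumann_rd_eventually_le:
  fixes \<Omega> :: "'a::euclidean_space set" and y G :: "'a \<Rightarrow> real \<Rightarrow> real"
  assumes dom: "bounded_C1_domain \<Omega> \<phi>" and d: "d \<ge> 0" and sol: "neumann_rd_solution \<Omega> \<phi> d G y"
    and t0: "t0 \<ge> 0" and nonneg: "\<And>t x. t0 \<le> t \<Longrightarrow> x \<in> closure \<Omega> \<Longrightarrow> 0 \<le> y x t"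
    and G_le: "\<And>t x. t0 < t \<Longrightarrow> x \<in> \<Omega> \<Longrightarrow> G x t \<le> \<alpha> - \<beta> * y x t"
    and \<alpha>: "\<alpha> > 0" and \<beta>: "\<beta> > 0" and \<eta>: "\<eta> > 0"
  shows "eventually (\<lambda>t. \<forall>x\<in>closure \<Omega>. y x t \<le> \<alpha> / \<beta> + \<eta>) at_top"
proof -
  have "bounded \<Omega>" using dom by (simp add: bounded_C1_domain_def)
  have "continuous_on (closure \<Omega> \<times> {0..}) (\<lambda>(x, t). y x t)"
    using sol by (simp add: neumann_rd_solution_def)
  then obtain M where M: "\<And>x t. x \<in> closure \<Omega> \<Longrightarrow> 0 \<le> t \<Longrightarrow> t \<le> t0 \<Longrightarrow> \<bar>y x t\<bar> \<le> M"
    using bounded_on_finite_time[OF \<open>bounded \<Omega>\<close>] by blast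
  define M0 where "M0 = max M 0"
  \<comment> \<open>\<open>U\<close> is a supersolution of the logistic equation \<open>U' = U (\<alpha> - \<beta> U)\<close> lying above \<open>y\<close> at \<open>t0\<close>.\<close>
  define U where "U t = \<alpha> / \<beta> + M0 * exp (- \<alpha> * (t - t0))" for t
  have U': "((\<lambda>t. - U t) has_real_derivative \<alpha> * (U t - \<alpha> / \<beta>)) (at t)" for t
    unfolding U_def by (auto intro!: derivative_eq_intros simp: algebra_simps)
  have below: "y x t \<le> U t" if "t0 \<le> t" "x \<in> closure \<Omega>" for x t
  proof -
    have "1 * y x t + - U t \<le> 0"
    proof (rule neumann_rd_comparison[OF dom d sol t0 U'])
      show "1 * y x t0 + - U t0 \<le> 0" if "x \<in> closure \<Omega>" for x
        using M[OF that t0 order_refl] divide_pos_pos[OF \<alpha> \<beta>] by (simp add: U_def M0_def)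
      show "1 * (y x s * G x s) + \<alpha> * (U s - \<alpha> / \<beta>) \<le> \<alpha> * (1 * y x s + - U s)"
        if "t0 < s" "s \<le> t" "x \<in> \<Omega>" "1 * y x s + - U s > 0" for s x
      proof -
        have "0 \<le> y x s"
          using nonneg[OF less_imp_le[OF that(1)]] that(3) closure_subset by blast
        then have "y x s * G x s \<le> y x s * (\<alpha> - \<beta> * y x s)"
          using G_le[OF that(1,3)] by (simp add: mult_left_mono)
        moreover have "0 \<le> U s" using \<alpha> \<beta> by (simp add: U_def M0_def)
        then have "U s * U s \<le> y x s * y x s"
          using that(4) by (intro mult_mono) auto
        then have "\<beta> * (U s * U s) \<le> \<beta> * (y x s * y x s)" using \<beta> by simp
        moreover have "\<alpha> * U s + \<alpha> * (U s - \<alpha> / \<beta>) \<le> \<beta> * (U s * U s)"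
          using \<beta> by (simp add: U_def M0_def field_simps power2_eq_square)
        ultimately show ?thesis by (simp add: algebra_simps)
      qed
    qed (use that in auto)
    then show ?thesis by simp
  qed
  have "((\<lambda>t. M0 * exp (- \<alpha> * (t - t0))) \<longlongrightarrow> 0) at_top" using \<alpha> by real_asymp
  then have "eventually (\<lambda>t. M0 * exp (- \<alpha> * (t - t0)) < \<eta>) at_top"
    using \<eta> by (rule order_tendstoD(2))
  then show ?thesis
    using eventually_ge_at_top[of t0]
  proof eventually_elim
    case (elim t)
    then show ?case using below[of t] by (fastforce simp: U_def)
  qed
qed

lemma neumann_rd_eventually_ge:
  fixes \<Omega> :: "'a::euclidean_space set" and y G :: "'a \<Rightarrow> real \<Rightarrow> real"
  assumes dom: "bounded_C1_domain \<Omega> \<phi>" and d: "d \<ge> 0" and sol: "neumann_rd_solution \<Omega> \<phi> d G y"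
    and t0: "t0 \<ge> 0" and m: "m > 0" and init: "\<And>x. x \<in> closure \<Omega> \<Longrightarrow> m \<le> y x t0"
    and nonneg: "\<And>t x. t0 \<le> t \<Longrightarrow> x \<in> closure \<Omega> \<Longrightarrow> 0 \<le> y x t"
    and G_ge: "\<And>t x. t0 < t \<Longrightarrow> x \<in> \<Omega> \<Longrightarrow> \<alpha> - \<beta> * y x t \<le> G x t"
    and \<alpha>: "\<alpha> > 0" and \<beta>: "\<beta> > 0" and \<eta>: "\<eta> > 0"
  shows "eventually (\<lambda>t. \<forall>x\<in>closure \<Omega>. \<alpha> / \<beta> - \<eta> \<le> y x t) at_top"
proof -
  define m' where "m' = min m (\<alpha> / (2 * \<beta>))"
  define B where "B = \<alpha> / \<beta> - m'"
  define \<gamma> where "\<gamma> = \<beta> * m'"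
  have m': "0 < m'" "m' \<le> m" "m' \<le> \<alpha> / (2 * \<beta>)" using m \<alpha> \<beta> by (auto simp: m'_def)
  then have "B > 0" "\<gamma> > 0" using \<alpha> \<beta> by (auto simp: B_def \<gamma>_def field_simps)
  \<comment> \<open>\<open>W\<close> is a subsolution of the logistic equation \<open>W' = W (\<alpha> - \<beta> W)\<close> lying below \<open>y\<close> at \<open>t0\<close>.\<close>
  define W where "W t = \<alpha> / \<beta> - B * exp (- \<gamma> * (t - t0))" for t
  have W': "(W has_real_derivative \<gamma> * (\<alpha> / \<beta> - W t)) (at t)" for t
    unfolding W_def by (auto intro!: derivative_eq_intros simp: algebra_simps)
  have above: "W t \<le> y x t" if "t0 \<le> t" "x \<in> closure \<Omega>" for x t
  proof -
    have "(-1) * y x t + W t \<le> 0"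
    proof (rule neumann_rd_comparison[OF dom d sol t0 W'])
      show "(-1) * y x t0 + W t0 \<le> 0" if "x \<in> closure \<Omega>" for x
        using init[OF that] m' by (simp add: W_def B_def)
      show "(-1) * (y x s * G x s) + \<gamma> * (\<alpha> / \<beta> - W s) \<le> \<alpha> * ((-1) * y x s + W s)"
        if "t0 < s" "s \<le> t" "x \<in> \<Omega>" "(-1) * y x s + W s > 0" for s x
      proof -
        have "0 \<le> y x s"
          using nonneg[OF less_imp_le[OF that(1)]] that(3) closure_subset by blast
        then have "y x s * (\<alpha> - \<beta> * y x s) \<le> y x s * G x s"
          using G_ge[OF that(1,3)] by (simp add: mult_left_mono)
        moreover have "y x s * y x s \<le> W s * W s"
          using that(4) \<open>0 \<le> y x s\<close> by (intro mult_mono) auto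
        then have "\<beta> * (y x s * y x s) \<le> \<beta> * (W s * W s)" using \<beta> by simp
        moreover have "exp (- \<gamma> * (s - t0)) \<le> 1" using \<open>\<gamma> > 0\<close> that(1) by simp
        then have "B * exp (- \<gamma> * (s - t0)) \<le> B" using \<open>B > 0\<close> by (simp add: mult_left_le)
        then have "m' \<le> W s" by (simp add: W_def B_def)
        then have "\<gamma> * (\<alpha> / \<beta> - W s) \<le> \<beta> * W s * (\<alpha> / \<beta> - W s)"
          using \<beta> \<open>B > 0\<close> by (intro mult_right_mono) (auto simp: \<gamma>_def W_def)
        moreover have "\<beta> * W s * (\<alpha> / \<beta> - W s) + \<beta> * (W s * W s) = \<alpha> * W s"
          using \<beta> by (simp add: field_simps)
        ultimately show ?thesis by (simp add: algebra_simps)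
      qed
    qed (use that in auto)
    then show ?thesis by simp
  qed
  have "((\<lambda>t. B * exp (- \<gamma> * (t - t0))) \<longlongrightarrow> 0) at_top" using \<open>\<gamma> > 0\<close> by real_asymp
  then have "eventually (\<lambda>t. B * exp (- \<gamma> * (t - t0)) < \<eta>) at_top"
    using \<eta> by (rule order_tendstoD(2))
  then show ?thesis
    using eventually_ge_at_top[of t0]
  proof eventually_elim
    case (elim t)
    then show ?case using above[of t] by (fastforce simp: W_def)
  qed
qed

lemma affine_le_max_endpoints:
  fixes p q x X :: real
  assumes "0 \<le> x" "x \<le> X"
  shows "p + q * x \<le> max p (p + q * X)"
proof (cases "q \<ge> 0")
  case True
  then show ?thesis using mult_left_mono[OF assms(2) True] by simp
next
  case False
  then show ?thesis using mult_nonpos_nonneg[of q x] assms(1) by simp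
qed

lemma descent_to_zero:
  fixes P :: "real \<Rightarrow> bool" and f :: "real \<Rightarrow> real"
  assumes \<delta>: "\<delta> > 0" and "0 \<le> V0" "P V0"
    and step: "\<And>V. 0 \<le> V \<Longrightarrow> V \<le> V0 \<Longrightarrow> P V \<Longrightarrow> P (max 0 (f V))"
    and below: "\<And>V. 0 \<le> V \<Longrightarrow> V \<le> V0 \<Longrightarrow> f V \<le> V - \<delta>"
  shows "P 0"
proof -
  have reach: "\<exists>V. 0 \<le> V \<and> V \<le> max 0 (V0 - n * \<delta>) \<and> P V" for n :: nat
  proof (induction n)
    case 0
    then show ?case using assms(2,3) by auto
  next
    case (Suc n)
    then obtain V where V: "0 \<le> V" "V \<le> max 0 (V0 - n * \<delta>)" "P V" by blast
    have "0 \<le> n * \<delta>" using \<delta> by simp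
    then have "V \<le> V0" using V(2) \<open>0 \<le> V0\<close> by linarith
    have "max 0 (f V) \<le> max 0 (V0 - Suc n * \<delta>)"
      using below[OF V(1) \<open>V \<le> V0\<close>] V(2) \<delta> by (auto simp: max_def algebra_simps split: if_splits)
    then show ?case using step[OF V(1) \<open>V \<le> V0\<close> V(3)] by (intro exI[of _ "max 0 (f V)"]) simp
  qed
  obtain n :: nat where "V0 < n * \<delta>" using reals_Archimedean3[OF \<delta>] by blast
  with reach[of n] show ?thesis by (metis antisym max.absorb1 less_imp_le diff_le_0_iff_le)
qed

locale competition_system =
  fixes \<Omega> :: "'a::euclidean_space set" and \<phi> k :: "'a \<Rightarrow> real"
    and a1 b1 c1 d1 a2 b2 c2 d2 c d :: real and u v :: "'a \<Rightarrow> real \<Rightarrow> real"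
  assumes dom: "bounded_C1_domain \<Omega> \<phi>"
    and k_nonneg: "\<And>x. x \<in> closure \<Omega> \<Longrightarrow> k x \<ge> 0"
    and pos: "a1 > 0" "b1 > 0" "c1 > 0" "d1 > 0" "a2 > 0" "b2 > 0" "c2 > 0" "d2 > 0"
    and init_pos: "c > 0" "d > 0"
    and sol: "is_classical_solution \<Omega> \<phi> k a1 b1 c1 d1 a2 b2 c2 d2 c d u v"
begin

definition growth_u :: "'a \<Rightarrow> real \<Rightarrow> real" where
  "growth_u x t = a1 - b1 * u x t - c1 * v x t"

definition growth_v :: "'a \<Rightarrow> real \<Rightarrow> real" where
  "growth_v x t = a2 / (1 + k x * u x t) - b2 * v x t - c2 * u x t"

lemma u_solution: "neumann_rd_solution \<Omega> \<phi> d1 growth_u u"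
proof -
  have eq: "d1 * laplacian (\<lambda>y. u y t) x + u x t * growth_u x t
      = d1 * laplacian (\<lambda>y. u y t) x + a1 * u x t - b1 * (u x t)\<^sup>2 - c1 * u x t * v x t" for x t
    by (simp add: growth_u_def algebra_simps power2_eq_square)
  show ?thesis
    using sol unfolding is_classical_solution_def neumann_rd_solution_def eq by blast
qed

lemma v_solution: "neumann_rd_solution \<Omega> \<phi> d2 growth_v v"
proof -
  have eq: "d2 * laplacian (\<lambda>y. v y t) x + v x t * growth_v x t
      = d2 * laplacian (\<lambda>y. v y t) x + a2 * v x t / (1 + k x * u x t) - b2 * (v x t)\<^sup>2
        - c2 * u x t * v x t" for x t
    by (simp add: growth_v_def algebra_simps power2_eq_square)
  show ?thesis
    using sol unfolding is_classical_solution_def neumann_rd_solution_def eq by blast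
qed

lemma bounded_domain: "bounded \<Omega>"
  using dom by (simp add: bounded_C1_domain_def)

lemma u_continuous: "continuous_on (closure \<Omega> \<times> {0..}) (\<lambda>(x, t). u x t)"
  using sol unfolding is_classical_solution_def by blast

lemma v_continuous: "continuous_on (closure \<Omega> \<times> {0..}) (\<lambda>(x, t). v x t)"
  using sol unfolding is_classical_solution_def by blast

lemma finite_time_bounds:
  obtains M where "\<And>x t. x \<in> closure \<Omega> \<Longrightarrow> 0 \<le> t \<Longrightarrow> t \<le> T \<Longrightarrow> \<bar>u x t\<bar> \<le> M \<and> \<bar>v x t\<bar> \<le> M"
proof -
  obtain Mu Mv where
    "\<And>x t. x \<in> closure \<Omega> \<Longrightarrow> 0 \<le> t \<Longrightarrow> t \<le> T \<Longrightarrow> \<bar>u x t\<bar> \<le> Mu"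
    "\<And>x t. x \<in> closure \<Omega> \<Longrightarrow> 0 \<le> t \<Longrightarrow> t \<le> T \<Longrightarrow> \<bar>v x t\<bar> \<le> Mv"
    using bounded_on_finite_time[OF bounded_domain u_continuous] bounded_on_finite_time[OF bounded_domain v_continuous]
    by metis
  then show thesis using that[of "max Mu Mv"] by (meson max.coboundedI1 max.coboundedI2)
qed

lemma u_pos: "0 \<le> t \<Longrightarrow> x \<in> closure \<Omega> \<Longrightarrow> u x t > 0"
proof (rule neumann_rd_positive[OF dom _ u_solution init_pos(1)])
  show "c \<le> u x 0" if "x \<in> closure \<Omega>" for x
    using sol that by (simp add: is_classical_solution_def)
  show "\<exists>L. \<forall>t\<in>{0<..T}. \<forall>x\<in>\<Omega>. \<bar>growth_u x t\<bar> \<le> L" for T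
  proof -
    obtain M where M: "\<And>x t. x \<in> closure \<Omega> \<Longrightarrow> 0 \<le> t \<Longrightarrow> t \<le> T \<Longrightarrow> \<bar>u x t\<bar> \<le> M \<and> \<bar>v x t\<bar> \<le> M"
      using finite_time_bounds by blast
    have "\<bar>growth_u x t\<bar> \<le> a1 + b1 * M + c1 * M" if "t \<in> {0<..T}" "x \<in> \<Omega>" for x t
    proof -
      have "\<bar>u x t\<bar> \<le> M" "\<bar>v x t\<bar> \<le> M" using M that closure_subset by force+
      then have "\<bar>b1 * u x t\<bar> \<le> b1 * M" "\<bar>c1 * v x t\<bar> \<le> c1 * M"
        using pos by (simp_all add: abs_mult)
      then show ?thesis using pos(1) unfolding growth_u_def abs_le_iff by linarith
    qed
    then show ?thesis by blast
  qed
qed (use pos in auto)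

lemma saturation_bounds:
  assumes "0 \<le> t" "x \<in> closure \<Omega>"
  shows "0 < a2 / (1 + k x * u x t)" "a2 / (1 + k x * u x t) \<le> a2"
proof -
  have "1 \<le> 1 + k x * u x t" using k_nonneg[OF assms(2)] u_pos[OF assms] by simp
  then show "0 < a2 / (1 + k x * u x t)" "a2 / (1 + k x * u x t) \<le> a2"
    using pos(5) by (simp_all add: divide_le_eq)
qed

lemma v_pos: "0 \<le> t \<Longrightarrow> x \<in> closure \<Omega> \<Longrightarrow> v x t > 0"
proof (rule neumann_rd_positive[OF dom _ v_solution init_pos(2)])
  show "d \<le> v x 0" if "x \<in> closure \<Omega>" for x
    using sol that by (simp add: is_classical_solution_def)
  show "\<exists>L. \<forall>t\<in>{0<..T}. \<forall>x\<in>\<Omega>. \<bar>growth_v x t\<bar> \<le> L" for T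
  proof -
    obtain M where M: "\<And>x t. x \<in> closure \<Omega> \<Longrightarrow> 0 \<le> t \<Longrightarrow> t \<le> T \<Longrightarrow> \<bar>u x t\<bar> \<le> M \<and> \<bar>v x t\<bar> \<le> M"
      using finite_time_bounds by blast
    have "\<bar>growth_v x t\<bar> \<le> a2 + b2 * M + c2 * M" if "t \<in> {0<..T}" "x \<in> \<Omega>" for x t
    proof -
      have x: "x \<in> closure \<Omega>" using that closure_subset by blast
      have "\<bar>u x t\<bar> \<le> M" "\<bar>v x t\<bar> \<le> M" using M x that by force+
      then have "\<bar>b2 * v x t\<bar> \<le> b2 * M" "\<bar>c2 * u x t\<bar> \<le> c2 * M"
        using pos by (simp_all add: abs_mult)
      moreover have "0 < a2 / (1 + k x * u x t)" "a2 / (1 + k x * u x t) \<le> a2"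
        using saturation_bounds[OF _ x] that by auto
      ultimately show ?thesis unfolding growth_v_def abs_le_iff by linarith
    qed
    then show ?thesis by blast
  qed
qed (use pos in auto)

lemma u_eventually_le:
  assumes "\<eta> > 0"
  shows "eventually (\<lambda>t. \<forall>x\<in>closure \<Omega>. u x t \<le> a1 / b1 + \<eta>) at_top"
proof (rule neumann_rd_eventually_le[OF dom _ u_solution order_refl _ _ pos(1,2) assms])
  show "0 \<le> u x t" if "0 \<le> t" "x \<in> closure \<Omega>" for x t
    using u_pos[OF that] by simp
  show "growth_u x t \<le> a1 - b1 * u x t" if "0 < t" "x \<in> \<Omega>" for x t
  proof -
    have "x \<in> closure \<Omega>" using that(2) closure_subset by blast
    then have "0 < c1 * v x t" using v_pos[OF less_imp_le[OF that(1)]] pos(3) by simp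
    then show ?thesis by (simp add: growth_u_def)
  qed
qed (use pos in simp)

definition v_limsup_le :: "real \<Rightarrow> bool" where
  "v_limsup_le V \<longleftrightarrow> (\<forall>\<eta>>0. eventually (\<lambda>t. \<forall>x\<in>closure \<Omega>. v x t \<le> V + \<eta>) at_top)"

lemma v_limsup_le_initial: "v_limsup_le (a2 / b2)"
  unfolding v_limsup_le_def
proof (intro allI impI)
  fix \<eta> :: real assume "\<eta> > 0"
  show "eventually (\<lambda>t. \<forall>x\<in>closure \<Omega>. v x t \<le> a2 / b2 + \<eta>) at_top"
  proof (rule neumann_rd_eventually_le[OF dom _ v_solution order_refl _ _ pos(5,6) \<open>\<eta> > 0\<close>])
    show "0 \<le> v x t" if "0 \<le> t" "x \<in> closure \<Omega>" for x t
      using v_pos[OF that] by simp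
    show "growth_v x t \<le> a2 - b2 * v x t" if "0 < t" "x \<in> \<Omega>" for x t
    proof -
      have tx: "0 \<le> t" "x \<in> closure \<Omega>" using that closure_subset by auto
      have "0 < c2 * u x t" using u_pos[OF tx] pos(7) by simp
      then show ?thesis using saturation_bounds(2)[OF tx] by (simp add: growth_v_def)
    qed
  qed (use pos in simp)
qed

lemma u_eventually_ge:
  assumes V: "0 \<le> V" "c1 * V < a1" "v_limsup_le V" and \<eta>: "\<eta> > 0"
  shows "eventually (\<lambda>t. \<forall>x\<in>closure \<Omega>. (a1 - c1 * V) / b1 - \<eta> \<le> u x t) at_top"
proof -
  define \<eta>1 where "\<eta>1 = min (\<eta> * b1 / (2 * c1)) ((a1 - c1 * V) / (2 * c1))"
  have "0 < \<eta> * b1 / (2 * c1)" "0 < (a1 - c1 * V) / (2 * c1)" using \<eta> pos V(2) by simp_all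
  then have "\<eta>1 > 0" by (simp add: \<eta>1_def)
  then have "eventually (\<lambda>t. \<forall>x\<in>closure \<Omega>. v x t \<le> V + \<eta>1) at_top"
    using V(3) unfolding v_limsup_le_def by blast
  then obtain T1 where T1: "\<forall>t\<ge>T1. \<forall>x\<in>closure \<Omega>. v x t \<le> V + \<eta>1"
    unfolding eventually_at_top_linorder by blast
  define t0 where "t0 = max T1 0"
  have "0 \<le> t0" by (simp add: t0_def)
  have "continuous_on (closure \<Omega>) (\<lambda>x. u x t0)"
    using continuous_on_time_slice[OF u_continuous \<open>0 \<le> t0\<close>] .
  moreover have "compact (closure \<Omega>)" using bounded_domain by simp
  ultimately obtain m where m: "m > 0" "\<And>x. x \<in> closure \<Omega> \<Longrightarrow> m \<le> u x t0"
    using compact_pos_lower_bound[of "closure \<Omega>" "\<lambda>x. u x t0"] u_pos[OF \<open>0 \<le> t0\<close>] by blast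
  define \<alpha>1 where "\<alpha>1 = a1 - c1 * (V + \<eta>1)"
  have "\<eta>1 \<le> (a1 - c1 * V) / (2 * c1)" "\<eta>1 \<le> \<eta> * b1 / (2 * c1)" by (simp_all add: \<eta>1_def)
  then have "c1 * \<eta>1 \<le> (a1 - c1 * V) / 2" "c1 * \<eta>1 \<le> \<eta> * b1 / 2"
    using pos(3) by (simp_all add: field_simps)
  then have "\<alpha>1 > 0" "(a1 - c1 * V) / b1 - \<eta> \<le> \<alpha>1 / b1 - \<eta> / 2"
    using V(2) pos(2) by (simp_all add: \<alpha>1_def field_simps)
  have "eventually (\<lambda>t. \<forall>x\<in>closure \<Omega>. \<alpha>1 / b1 - \<eta> / 2 \<le> u x t) at_top"
  proof (rule neumann_rd_eventually_ge[OF dom _ u_solution _ m _ _ \<open>\<alpha>1 > 0\<close> pos(2)])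
    show "0 \<le> u x t" if "t0 \<le> t" "x \<in> closure \<Omega>" for x t
      using u_pos[of t x] that by (simp add: t0_def)
    show "\<alpha>1 - b1 * u x t \<le> growth_u x t" if "t0 < t" "x \<in> \<Omega>" for x t
      using T1[rule_format, of t x] that closure_subset pos(3) by (force simp: t0_def growth_u_def \<alpha>1_def)
  qed (use pos \<eta> in \<open>simp_all add: t0_def\<close>)
  then show ?thesis
    by eventually_elim (use \<open>(a1 - c1 * V) / b1 - \<eta> \<le> \<alpha>1 / b1 - \<eta> / 2\<close> in force)
qed

lemma v_limsup_le_step:
  assumes V: "0 \<le> V" "c1 * V < a1" "v_limsup_le V"
  shows "v_limsup_le (max 0 ((a2 - c2 * ((a1 - c1 * V) / b1)) / b2))"
  unfolding v_limsup_le_def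
proof (intro allI impI)
  fix \<eta> :: real assume "\<eta> > 0"
  define f where "f = (a2 - c2 * ((a1 - c1 * V) / b1)) / b2"
  define \<eta>2 where "\<eta>2 = \<eta> * b2 / (4 * c2)"
  have "\<eta>2 > 0" using \<open>\<eta> > 0\<close> pos by (simp add: \<eta>2_def)
  then have "eventually (\<lambda>t. \<forall>x\<in>closure \<Omega>. (a1 - c1 * V) / b1 - \<eta>2 \<le> u x t) at_top"
    by (rule u_eventually_ge[OF V])
  then obtain T2 where T2: "\<forall>t\<ge>T2. \<forall>x\<in>closure \<Omega>. (a1 - c1 * V) / b1 - \<eta>2 \<le> u x t"
    unfolding eventually_at_top_linorder by blast
  define t0 where "t0 = max T2 0"
  define \<alpha> where "\<alpha> = max (a2 - c2 * ((a1 - c1 * V) / b1 - \<eta>2)) (b2 * \<eta> / 2)"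
  have "\<alpha> > 0" using \<open>\<eta> > 0\<close> pos by (simp add: \<alpha>_def less_max_iff_disj)
  have "eventually (\<lambda>t. \<forall>x\<in>closure \<Omega>. v x t \<le> \<alpha> / b2 + \<eta> / 2) at_top"
  proof (rule neumann_rd_eventually_le[OF dom _ v_solution _ _ _ \<open>\<alpha> > 0\<close> pos(6)])
    show "0 \<le> v x t" if "t0 \<le> t" "x \<in> closure \<Omega>" for x t
      using v_pos[of t x] that by (simp add: t0_def)
    show "growth_v x t \<le> \<alpha> - b2 * v x t" if "t0 < t" "x \<in> \<Omega>" for x t
    proof -
      have tx: "0 \<le> t" "x \<in> closure \<Omega>" using that closure_subset by (auto simp: t0_def)
      have "(a1 - c1 * V) / b1 - \<eta>2 \<le> u x t" using T2 that(1) tx(2) by (simp add: t0_def)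
      then have "c2 * ((a1 - c1 * V) / b1 - \<eta>2) \<le> c2 * u x t" using pos(7) by simp
      moreover have "a2 / (1 + k x * u x t) \<le> a2" by (rule saturation_bounds(2)[OF tx])
      moreover have "a2 - c2 * ((a1 - c1 * V) / b1 - \<eta>2) \<le> \<alpha>" by (simp add: \<alpha>_def)
      ultimately show ?thesis by (simp add: growth_v_def)
    qed
  qed (use pos \<open>\<eta> > 0\<close> in \<open>simp_all add: t0_def\<close>)
  moreover have "\<alpha> / b2 \<le> max 0 f + \<eta> / 2"
  proof -
    have "a2 - c2 * ((a1 - c1 * V) / b1 - \<eta>2) = b2 * (f + \<eta> / 4)"
      using pos by (simp add: f_def \<eta>2_def field_simps)
    also have "\<dots> \<le> b2 * (max 0 f + \<eta> / 2)" using pos \<open>\<eta> > 0\<close> by simp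
    finally have "\<alpha> \<le> b2 * (max 0 f + \<eta> / 2)"
      using pos \<open>\<eta> > 0\<close> by (simp add: \<alpha>_def)
    then show ?thesis using pos(6) by (simp add: pos_divide_le_eq mult.commute)
  qed
  ultimately show "eventually (\<lambda>t. \<forall>x\<in>closure \<Omega>. v x t \<le> max 0 f + \<eta>) at_top"
    by (auto elim!: eventually_mono)
qed

lemma v_limsup_le_zero:
  assumes "a2 * b1 < a1 * c2" "a2 * c1 < a1 * b2"
  shows "v_limsup_le 0"
proof -
  define f where "f V = (a2 - c2 * ((a1 - c1 * V) / b1)) / b2" for V
  define V0 where "V0 = a2 / b2"
  have "c1 * V0 < a1" using assms(2) pos by (simp add: V0_def field_simps)
  have f_affine: "f V - V = f 0 + (c1 * c2 / (b1 * b2) - 1) * V" for V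
    using pos by (simp add: f_def field_simps)
  have "f 0 < 0" using assms(1) pos by (simp add: f_def field_simps)
  moreover have "f V0 < V0" using assms(2) pos by (simp add: f_def V0_def field_simps)
  ultimately have "min (- f 0) (V0 - f V0) > 0" by simp
  show ?thesis
  proof (rule descent_to_zero[of "min (- f 0) (V0 - f V0)" V0 v_limsup_le f])
    show "0 \<le> V0" using pos by (simp add: V0_def)
    show "v_limsup_le V0" using v_limsup_le_initial by (simp add: V0_def)
    show "v_limsup_le (max 0 (f V))" if "0 \<le> V" "V \<le> V0" "v_limsup_le V" for V
    proof -
      have "c1 * V \<le> c1 * V0" using that(2) pos(3) by simp
      then have "c1 * V < a1" using \<open>c1 * V0 < a1\<close> by linarith
      then show ?thesis using v_limsup_le_step[OF that(1) _ that(3)] by (simp add: f_def)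
    qed
    show "f V \<le> V - min (- f 0) (V0 - f V0)" if "0 \<le> V" "V \<le> V0" for V
      using affine_le_max_endpoints[OF that, of "f 0" "c1 * c2 / (b1 * b2) - 1"]
        f_affine[of V] f_affine[of V0] by simp
  qed fact
qed

theorem convergence_to_semitrivial_state:
  assumes "a2 * b1 < a1 * c2" "a2 * c1 < a1 * b2" "\<epsilon> > 0"
  shows "\<exists>T. \<forall>t\<ge>T. \<forall>x\<in>\<Omega>. \<bar>u x t - a1 / b1\<bar> < \<epsilon> \<and> \<bar>v x t\<bar> < \<epsilon>"
proof -
  have "\<epsilon> / 2 > 0" using assms(3) by simp
  have "eventually (\<lambda>t. \<forall>x\<in>closure \<Omega>. (a1 - c1 * 0) / b1 - \<epsilon> / 2 \<le> u x t) at_top"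
    using pos(1) by (intro u_eventually_ge v_limsup_le_zero assms(1,2) \<open>\<epsilon> / 2 > 0\<close>) simp_all
  moreover have "eventually (\<lambda>t. \<forall>x\<in>closure \<Omega>. u x t \<le> a1 / b1 + \<epsilon> / 2) at_top"
    by (rule u_eventually_le[OF \<open>\<epsilon> / 2 > 0\<close>])
  moreover have "eventually (\<lambda>t. \<forall>x\<in>closure \<Omega>. v x t \<le> 0 + \<epsilon> / 2) at_top"
    using v_limsup_le_zero[OF assms(1,2)] \<open>\<epsilon> / 2 > 0\<close> unfolding v_limsup_le_def by blast
  moreover have "eventually (\<lambda>t::real. 0 \<le> t) at_top" by (rule eventually_ge_at_top)
  ultimately have "eventually (\<lambda>t. \<forall>x\<in>\<Omega>. \<bar>u x t - a1 / b1\<bar> < \<epsilon> \<and> \<bar>v x t\<bar> < \<epsilon>) at_top"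
  proof eventually_elim
    case (elim t)
    show ?case
    proof
      fix x assume "x \<in> \<Omega>"
      then have x: "x \<in> closure \<Omega>" using closure_subset by blast
      have "a1 / b1 - \<epsilon> / 2 \<le> u x t" "u x t \<le> a1 / b1 + \<epsilon> / 2" "v x t \<le> \<epsilon> / 2"
        using elim(1-3) x by auto
      moreover have "0 < v x t" using v_pos[OF elim(4) x] .
      ultimately show "\<bar>u x t - a1 / b1\<bar> < \<epsilon> \<and> \<bar>v x t\<bar> < \<epsilon>"
        using assms(3) by (simp add: abs_less_iff)
    qed
  qed
  then show ?thesis unfolding eventually_at_top_linorder by blast
qed

end

theorem mainTheorem15:
  fixes \<Omega> :: "'a::euclidean_space set" and \<phi> k :: "'a \<Rightarrow> real"
    and a1 b1 c1 d1 a2 b2 c2 d2 c d :: real and u v :: "'a \<Rightarrow> real \<Rightarrow> real"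
  assumes dom: "bounded_C1_domain \<Omega> \<phi>"
    and k_C1: "C1_on_closure k \<Omega>"
    and k_nonneg: "\<forall>x\<in>closure \<Omega>. k x \<ge> 0"
    and k_zero_null: "{x\<in>closure \<Omega>. k x = 0} \<in> null_sets lebesgue"
    and pos: "a1 > 0" "b1 > 0" "c1 > 0" "d1 > 0" "a2 > 0" "b2 > 0" "c2 > 0" "d2 > 0"
    and init_pos: "c > 0" "d > 0"
    and sol: "is_classical_solution \<Omega> \<phi> k a1 b1 c1 d1 a2 b2 c2 d2 c d u v"
    and hk: "(SUP x\<in>closure \<Omega>. k x) > (a2 * b1\<^sup>2 - c2 * a1 * b1) / (a1\<^sup>2 * c2)"
    and hratio: "a1 / a2 > max (b1 / c2) (c1 / b2)"
  shows "\<forall>\<epsilon>>0. \<exists>T. \<forall>t\<ge>T. \<forall>x\<in>\<Omega>. \<bar>u x t - a1 / b1\<bar> < \<epsilon> \<and> \<bar>v x t\<bar> < \<epsilon>"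
proof -
  interpret competition_system \<Omega> \<phi> k a1 b1 c1 d1 a2 b2 c2 d2 c d u v
    using dom k_nonneg pos init_pos sol by unfold_locales auto
  have "a2 * b1 < a1 * c2" "a2 * c1 < a1 * b2"
    using hratio pos by (simp_all add: field_simps)
  then show ?thesis using convergence_to_semitrivial_state by blast
qed

end
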